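(* Consider Problem 2 (defined in the context) with $k_1>k_2$ and $\bar P\ge F k_2$. Let $M=\left\lfloor\frac{\bar P-Fk_2}{k_1-k_2}\right\rfloor$. (i) If $B_3>B_2$, an optimal solution is $$X_1=\min\left\{\left\lfloor\tfrac{C}{I^S}\right\rfloor,\ F,\ M\right\},\quad X_2=\max\left\{0,\ \min\{F,M\}-X_1\right\},\quad X_3=F-X_1-X_2,$$ and the optimal value is $B^*=B_2X_2+B_3X_3$. (ii) If $B_3\le B_2$, an optimal solution is $$X_1=\min\left\{\left\lfloor\tfrac{C}{I^S}\right\rfloor,\ F,\ M\right\},\quad X_2=0,\quad X_3=F-X_1,$$ and the optimal value is $B^*=B_3X_3$.
   Context: Problem 2: Given a positive integer $F$ (number of equally popular tasks), reals $I^S>0$ (remote input data size per task), $C\ge 0$ (cache size), $\bar P$ (average power budget), $k_1>0$ and $k_2>0$ (average power consumed per task by local computing and by uplink transmission for MEC computing, respectively), $B_1=0$, and $B_2,B_3>0$ (the minimum bandwidths per task for route 2 "local computing without local caching" and route 3 "MEC computing"; route 1 is "local computing with local caching"), minimize $X_1B_1+X_2B_2+X_3B_3$ over nonnegative integers $X_1,X_2,X_3$ (numbers of tasks served via routes 1, 2, 3) subject to $I^SX_1\le C$, $k_1(X_1+X_2)+k_2X_3\le\bar P$, and $X_1+X_2+X_3=F$. $\lfloor\cdot\rfloor$ denotes the floor function. *)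

theory Defs
  imports Complex_Main
begin

definition feasible2 ::
  "nat \<Rightarrow> real \<Rightarrow> real \<Rightarrow> real \<Rightarrow> real \<Rightarrow> real \<Rightarrow> nat \<Rightarrow> nat \<Rightarrow> nat \<Rightarrow> bool" where
  "feasible2 F IS C Pbar k1 k2 X1 X2 X3 \<longleftrightarrow>
     IS * real X1 \<le> C \<and>
     k1 * real (X1 + X2) + k2 * real X3 \<le> Pbar \<and>
     X1 + X2 + X3 = F"

definition cost2 :: "real \<Rightarrow> real \<Rightarrow> real \<Rightarrow> nat \<Rightarrow> nat \<Rightarrow> nat \<Rightarrow> real" where
  "cost2 B1 B2 B3 X1 X2 X3 = real X1 * B1 + real X2 * B2 + real X3 * B3"

definition optimal2 ::
  "nat \<Rightarrow> real \<Rightarrow> real \<Rightarrow> real \<Rightarrow> real \<Rightarrow> real \<Rightarrow> real \<Rightarrow> real \<Rightarrow> real \<Rightarrow> nat \<Rightarrow> nat \<Rightarrow> nat \<Rightarrow> bool" where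
  "optimal2 F IS C Pbar k1 k2 B1 B2 B3 X1 X2 X3 \<longleftrightarrow>
     feasible2 F IS C Pbar k1 k2 X1 X2 X3 \<and>
     (\<forall>Y1 Y2 Y3. feasible2 F IS C Pbar k1 k2 Y1 Y2 Y3 \<longrightarrow>
        cost2 B1 B2 B3 X1 X2 X3 \<le> cost2 B1 B2 B3 Y1 Y2 Y3)"

end

theory Submission
  imports Defs
begin

text \<open>Substituting \<open>X3 = F - X1 - X2\<close> turns the power budget into the cap
  \<open>X1 + X2 \<le> M\<close> (because \<open>k1 > k2\<close>) and the cache into the cap \<open>X1 \<le> \<lfloor>C/I\<^sup>S\<rfloor>\<close>.
  With \<open>B1 = 0\<close> the cost is \<open>F B3 - (B3 - B2)(X1 + X2) - B2 X1\<close>, so when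
  \<open>B2 \<le> B3\<close> it suffices to make \<open>X1\<close> and \<open>X1 + X2\<close> simultaneously as large as
  the caps allow; when \<open>B3 \<le> B2\<close> route 2 is never cheaper than route 3, the cost
  is at least \<open>B3 (F - X1)\<close>, and only \<open>X1\<close> needs to be maximal.\<close>

lemma real_le_iff_le_nat_floor:
  fixes x :: real
  assumes "x \<ge> 0"
  shows "real y \<le> x \<longleftrightarrow> y \<le> nat \<lfloor>x\<rfloor>"
  using assms by (simp add: le_nat_iff le_floor_iff)

lemma feasible2_iff_caps:
  fixes IS C Pbar k1 k2 :: real
  assumes "IS > 0" "C \<ge> 0" "k1 > k2" "Pbar \<ge> real F * k2"
  shows "feasible2 F IS C Pbar k1 k2 Y1 Y2 Y3 \<longleftrightarrow>
     Y1 \<le> nat \<lfloor>C / IS\<rfloor> \<and> Y1 + Y2 \<le> nat \<lfloor>(Pbar - real F * k2) / (k1 - k2)\<rfloor> \<and>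
     Y1 + Y2 + Y3 = F"
proof -
  have cache: "IS * real Y1 \<le> C \<longleftrightarrow> Y1 \<le> nat \<lfloor>C / IS\<rfloor>"
    using assms real_le_iff_le_nat_floor[of "C / IS" Y1]
    by (simp add: pos_le_divide_eq mult.commute)
  have power: "k1 * real (Y1 + Y2) + k2 * real Y3 \<le> Pbar \<longleftrightarrow>
      Y1 + Y2 \<le> nat \<lfloor>(Pbar - real F * k2) / (k1 - k2)\<rfloor>"
    if sum: "Y1 + Y2 + Y3 = F"
  proof -
    have "real F = real Y1 + real Y2 + real Y3"
      using sum by simp
    then have "k1 * real (Y1 + Y2) + k2 * real Y3 \<le> Pbar \<longleftrightarrow>
        real (Y1 + Y2) * (k1 - k2) \<le> Pbar - real F * k2"
      by (simp add: algebra_simps)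
    also have "\<dots> \<longleftrightarrow> real (Y1 + Y2) \<le> (Pbar - real F * k2) / (k1 - k2)"
      using assms by (simp add: pos_le_divide_eq)
    also have "\<dots> \<longleftrightarrow> Y1 + Y2 \<le> nat \<lfloor>(Pbar - real F * k2) / (k1 - k2)\<rfloor>"
      using assms by (intro real_le_iff_le_nat_floor) simp
    finally show ?thesis .
  qed
  show ?thesis
    unfolding feasible2_def using cache power by blast
qed

lemma cost2_no_local_cost:
  assumes "Y1 + Y2 + Y3 = F"
  shows "cost2 0 B2 B3 Y1 Y2 Y3 = real F * B3 - (B3 - B2) * real (Y1 + Y2) - B2 * real Y1"
  using assms unfolding cost2_def by (auto simp: algebra_simps)

lemma optimal2_fill_both_caps:
  fixes IS C Pbar k1 k2 B2 B3 :: real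
  assumes "IS > 0" "C \<ge> 0" "k1 > k2" "Pbar \<ge> real F * k2" "0 \<le> B2" "B2 \<le> B3"
  defines "M \<equiv> nat \<lfloor>(Pbar - real F * k2) / (k1 - k2)\<rfloor>"
  defines "X1 \<equiv> min (nat \<lfloor>C / IS\<rfloor>) (min F M)"
  shows "optimal2 F IS C Pbar k1 k2 0 B2 B3 X1 (min F M - X1) (F - min F M)"
  unfolding optimal2_def
proof (intro conjI allI impI)
  note caps = feasible2_iff_caps[OF assms(1-4), folded M_def]
  have "X1 \<le> min F M"
    unfolding X1_def by (rule min.cobounded2)
  then have X: "X1 + (min F M - X1) + (F - min F M) = F" "X1 + (min F M - X1) = min F M"
    by auto
  then show "feasible2 F IS C Pbar k1 k2 X1 (min F M - X1) (F - min F M)"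
    unfolding caps by (simp add: X1_def)
  fix Y1 Y2 Y3
  assume "feasible2 F IS C Pbar k1 k2 Y1 Y2 Y3"
  then have Y: "Y1 \<le> nat \<lfloor>C / IS\<rfloor>" "Y1 + Y2 \<le> M" "Y1 + Y2 + Y3 = F"
    unfolding caps by auto
  have "Y1 + Y2 \<le> min F M" "Y1 \<le> X1"
    using Y unfolding X1_def by auto
  then have "(B3 - B2) * real (Y1 + Y2) \<le> (B3 - B2) * real (min F M)"
    and "B2 * real Y1 \<le> B2 * real X1"
    using assms(5,6) by (auto intro: mult_left_mono)
  then show "cost2 0 B2 B3 X1 (min F M - X1) (F - min F M) \<le> cost2 0 B2 B3 Y1 Y2 Y3"
    unfolding cost2_no_local_cost[OF Y(3)] cost2_no_local_cost[OF X(1)] X(2) by linarith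
qed

lemma optimal2_fill_cache_only:
  fixes IS C Pbar k1 k2 B2 B3 :: real
  assumes "IS > 0" "C \<ge> 0" "k1 > k2" "Pbar \<ge> real F * k2" "0 \<le> B3" "B3 \<le> B2"
  defines "X1 \<equiv> min (nat \<lfloor>C / IS\<rfloor>) (min F (nat \<lfloor>(Pbar - real F * k2) / (k1 - k2)\<rfloor>))"
  shows "optimal2 F IS C Pbar k1 k2 0 B2 B3 X1 0 (F - X1)"
  unfolding optimal2_def
proof (intro conjI allI impI)
  note caps = feasible2_iff_caps[OF assms(1-4)]
  show "feasible2 F IS C Pbar k1 k2 X1 0 (F - X1)"
    unfolding caps X1_def by auto
  fix Y1 Y2 Y3
  assume "feasible2 F IS C Pbar k1 k2 Y1 Y2 Y3"
  then have Y: "Y1 \<le> X1" "Y1 + Y2 + Y3 = F"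
    unfolding caps X1_def by auto
  have "cost2 0 B2 B3 X1 0 (F - X1) = B3 * (real F - real X1)"
    unfolding cost2_def X1_def by (simp add: of_nat_diff algebra_simps)
  also have "\<dots> \<le> B3 * (real F - real Y1)"
    using Y(1) assms(5) by (intro mult_left_mono) auto
  also have "\<dots> = B3 * real Y2 + B3 * real Y3"
    using Y(2) by (auto simp: algebra_simps)
  also have "\<dots> \<le> cost2 0 B2 B3 Y1 Y2 Y3"
    unfolding cost2_def using assms(6) by (simp add: mult_right_mono mult.commute)
  finally show "cost2 0 B2 B3 X1 0 (F - X1) \<le> cost2 0 B2 B3 Y1 Y2 Y3" .
qed

theorem theorem1:
  fixes F :: nat and IS C Pbar k1 k2 B1 B2 B3 :: real
  assumes "F > 0" and "IS > 0" and "C \<ge> 0" and "k1 > 0" and "k2 > 0"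
    and "B1 = 0" and "B2 > 0" and "B3 > 0"
    and "k1 > k2" and "Pbar \<ge> real F * k2"
  defines "M \<equiv> nat \<lfloor>(Pbar - real F * k2) / (k1 - k2)\<rfloor>"
  defines "X1 \<equiv> min (nat \<lfloor>C / IS\<rfloor>) (min F M)"
  shows "(B3 > B2 \<longrightarrow>
           (let X2 = max 0 (min F M - X1); X3 = F - X1 - X2 in
              optimal2 F IS C Pbar k1 k2 B1 B2 B3 X1 X2 X3 \<and>
              cost2 B1 B2 B3 X1 X2 X3 = B2 * real X2 + B3 * real X3)) \<and>
         (B3 \<le> B2 \<longrightarrow>
           (let X2 = 0; X3 = F - X1 in
              optimal2 F IS C Pbar k1 k2 B1 B2 B3 X1 X2 X3 \<and>
              cost2 B1 B2 B3 X1 X2 X3 = B3 * real X3))"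
proof (intro conjI impI)
  assume "B2 < B3"
  then have "optimal2 F IS C Pbar k1 k2 0 B2 B3 X1 (min F M - X1) (F - min F M)"
    using assms(2,3,7,9,10) unfolding M_def X1_def by (intro optimal2_fill_both_caps) auto
  moreover have "F - X1 - (min F M - X1) = F - min F M"
    unfolding X1_def by (simp add: min_def)
  ultimately show "let X2 = max 0 (min F M - X1); X3 = F - X1 - X2 in
      optimal2 F IS C Pbar k1 k2 B1 B2 B3 X1 X2 X3 \<and>
      cost2 B1 B2 B3 X1 X2 X3 = B2 * real X2 + B3 * real X3"
    using assms(6) by (simp add: cost2_def)
next
  assume "B3 \<le> B2"
  then have "optimal2 F IS C Pbar k1 k2 0 B2 B3 X1 0 (F - X1)"
    using assms(2,3,8,9,10) unfolding M_def X1_def by (intro optimal2_fill_cache_only) auto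
  then show "let X2 = 0; X3 = F - X1 in
      optimal2 F IS C Pbar k1 k2 B1 B2 B3 X1 X2 X3 \<and>
      cost2 B1 B2 B3 X1 X2 X3 = B3 * real X3"
    using assms(6) by (simp add: cost2_def)
qed

end
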